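(* Let $N\geq2$. For all integers $n,m$ such that none of $n+m$, $n-m$ is divisible by $2N$, $$[H^0_n,H^0_m]=2\sin\!\Bigl(\pi\tfrac{n-m}{2N}\Bigr)H^1_{n+m}+2\sin\!\Bigl(\pi\tfrac{n+m}{2N}\Bigr)H^1_{n-m}.$$
   Context: On $\mathcal{H}_N=(\mathbb{C}^2)^{\otimes N}$ let $c_j^\dagger=i^{j-1}\,i^{\sigma^z_1+\dots+\sigma^z_{j-1}}\sigma^+_j$, $c_j=i^{-j+1}\,i^{-\sigma^z_1-\dots-\sigma^z_{j-1}}\sigma^-_j$ (Jordan–Wigner fermions; $\sigma^a_j$ Pauli matrices on site $j$, $\sigma^\pm$ the raising/lowering matrices), and $e_j=c_jc_{j+1}^\dagger+c_{j+1}c_j^\dagger+i(c_j^\dagger c_j-c_{j+1}^\dagger c_{j+1})$, $1\leq j\leq N-1$. For $n\in\mathbb{Z}$ set $H^0_n=\sum_{j=1}^{N-1}\cos(\pi nj/N)\,e_j$, and for $k\in\mathbb{Z}$ not divisible by $2N$ define $H^1_k$ by $[H^0_0,H^0_k]=-4\sin(\pi\tfrac{k}{2N})H^1_k$. *)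

theory Defs
  imports "HOL-Analysis.Analysis" "Jordan_Normal_Form.Matrix"
begin

text \<open>Operators on the N-site spin chain (C^2)^{\<otimes>N} are complex 2^N x 2^N matrices.
  Basis index s < 2^N; bit (j-1) of s is the state of site j (bit 0 = spin up, bit 1 = spin down).\<close>

definition dimH :: "nat \<Rightarrow> nat" where "dimH N = 2 ^ N"

definition sbit :: "nat \<Rightarrow> nat \<Rightarrow> nat" where "sbit s k = s div 2 ^ k mod 2"

definition site_op :: "nat \<Rightarrow> nat \<Rightarrow> complex mat \<Rightarrow> complex mat" where
  "site_op N j A = mat (dimH N) (dimH N) (\<lambda>(r, c).
     if (\<forall>k<N. k \<noteq> j - 1 \<longrightarrow> sbit r k = sbit c k)
     then A $$ (sbit r (j - 1), sbit c (j - 1)) else 0)"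

definition pauli_z :: "complex mat" where "pauli_z = mat_of_rows_list 2 [[1, 0], [0, -1]]"
definition pauli_plus :: "complex mat" where "pauli_plus = mat_of_rows_list 2 [[0, 1], [0, 0]]"
definition pauli_minus :: "complex mat" where "pauli_minus = mat_of_rows_list 2 [[0, 0], [1, 0]]"

definition sz :: "nat \<Rightarrow> nat \<Rightarrow> complex mat" where "sz N j = site_op N j pauli_z"
definition splus :: "nat \<Rightarrow> nat \<Rightarrow> complex mat" where "splus N j = site_op N j pauli_plus"
definition sminus :: "nat \<Rightarrow> nat \<Rightarrow> complex mat" where "sminus N j = site_op N j pauli_minus"

definition op_sum :: "nat \<Rightarrow> ('i \<Rightarrow> complex mat) \<Rightarrow> 'i set \<Rightarrow> complex mat" where
  "op_sum N f J = mat (dimH N) (dimH N) (\<lambda>(r, c). \<Sum>j\<in>J. f j $$ (r, c))"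

text \<open>Functional calculus for a diagonal (in the computational basis) operator.\<close>
definition diag_fun :: "(complex \<Rightarrow> complex) \<Rightarrow> complex mat \<Rightarrow> complex mat" where
  "diag_fun f A = mat (dim_row A) (dim_row A) (\<lambda>(r, c). if r = c then f (A $$ (r, r)) else 0)"

definition sz_string :: "nat \<Rightarrow> nat \<Rightarrow> complex mat" where
  "sz_string N j = op_sum N (\<lambda>k. sz N k) {1..<j}"

definition cdag :: "nat \<Rightarrow> nat \<Rightarrow> complex mat" where
  "cdag N j = (\<i> ^ (j - 1)) \<cdot>\<^sub>m (diag_fun (\<lambda>x. \<i> powr x) (sz_string N j) * splus N j)"

definition cann :: "nat \<Rightarrow> nat \<Rightarrow> complex mat" where
  "cann N j = (\<i> powi (1 - int j)) \<cdot>\<^sub>m (diag_fun (\<lambda>x. \<i> powr (- x)) (sz_string N j) * sminus N j)"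

definition e_gen :: "nat \<Rightarrow> nat \<Rightarrow> complex mat" where
  "e_gen N j = cann N j * cdag N (j + 1) + cann N (j + 1) * cdag N j
     + \<i> \<cdot>\<^sub>m (cdag N j * cann N j - cdag N (j + 1) * cann N (j + 1))"

definition comm :: "complex mat \<Rightarrow> complex mat \<Rightarrow> complex mat" where
  "comm A B = A * B - B * A"

definition H0 :: "nat \<Rightarrow> int \<Rightarrow> complex mat" where
  "H0 N n = op_sum N (\<lambda>j. complex_of_real (cos (pi * real_of_int n * real j / real N)) \<cdot>\<^sub>m e_gen N j) {1..N-1}"

text \<open>H^1_k is the unique operator with [H^0_0, H^0_k] = -4 sin(pi k/(2N)) H^1_k
  (well defined since the sine is nonzero when 2N does not divide k).\<close>
definition H1 :: "nat \<Rightarrow> int \<Rightarrow> complex mat" where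
  "H1 N k = complex_of_real (- 1 / (4 * sin (pi * real_of_int k / (2 * real N)))) \<cdot>\<^sub>m comm (H0 N 0) (H0 N k)"

end

theory Submission
  imports Defs
begin

(* An operator is local on a set T of sites if its matrix elements vanish unless
       row and column agree outside T, and otherwise depend only on their bits in T;
       operators local on disjoint sets commute.  Computing the matrix elements of the
       Jordan-Wigner fermions, the string phases cancel in every term of e_j, so e_j is
       local on the sites j, j+1 and e_j, e_l commute whenever |j - l| > 1.

   For any family E_j in which non-neighbours commute,
       [sum a_j E_j, sum b_j E_j] = sum (a_j b_(j+1) - a_(j+1) b_j) [E_j, E_(j+1)].
       Hence [H0_n, H0_m] = sum_j kappa_(n,m)(j) [e_j, e_(j+1)], and by definition H1_k is
       the same sum for kappa_(0,k), rescaled by -1/(4 sin(pi k/2N)).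

   (3) Trigonometry.  Product-to-sum formulas express kappa_(n,m) as a fixed linear
       combination of kappa_(0,n+m) and kappa_(0,n-m); the theorem follows by linearity. *)

lemma sbit_less_2: "sbit s k < 2"
  by (simp add: sbit_def)

lemma sbit_Suc: "sbit s (Suc k) = sbit (s div 2) k"
  by (simp add: sbit_def div_mult2_eq)

lemma bits_eq:
  "a < 2 ^ N \<Longrightarrow> b < 2 ^ N \<Longrightarrow> (\<And>k. k < N \<Longrightarrow> sbit a k = sbit b k) \<Longrightarrow> a = b"
proof (induction N arbitrary: a b)
  case 0
  then show ?case by simp
next
  case (Suc N)
  have "a mod 2 = b mod 2"
    using Suc.prems(3)[of 0] by (simp add: sbit_def)
  moreover have "a div 2 = b div 2"
    by (rule Suc.IH) (use Suc.prems in \<open>auto simp: sbit_Suc[symmetric]\<close>)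
  ultimately show ?case
    by (metis div_mult_mod_eq)
qed

fun bnum :: "nat \<Rightarrow> (nat \<Rightarrow> nat) \<Rightarrow> nat" where
  "bnum 0 f = 0"
| "bnum (Suc N) f = f 0 + 2 * bnum N (\<lambda>k. f (Suc k))"

lemma bnum_less: "(\<And>k. f k < 2) \<Longrightarrow> bnum N f < dimH N"
proof (induction N arbitrary: f)
  case 0
  then show ?case by (simp add: dimH_def)
next
  case (Suc N)
  have "bnum N (\<lambda>k. f (Suc k)) < 2 ^ N" and "f 0 < 2"
    using Suc by (auto simp: dimH_def)
  then show ?case by (simp add: dimH_def)
qed

lemma bnum_sbit: "(\<And>k. f k < 2) \<Longrightarrow> k < N \<Longrightarrow> sbit (bnum N f) k = f k"
proof (induction N arbitrary: f k)
  case 0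
  then show ?case by simp
next
  case (Suc N)
  have f0: "f 0 < 2" using Suc.prems by auto
  show ?case
  proof (cases k)
    case 0
    then show ?thesis using f0 by (simp add: sbit_def)
  next
    case (Suc k')
    then show ?thesis
      using Suc.IH[of "\<lambda>k. f (Suc k)" k'] Suc.prems f0 by (simp add: sbit_Suc)
  qed
qed

lemma differing_site:
  assumes "a < dimH N" "b < dimH N" "a \<noteq> b"
  obtains i where "i < N" "sbit a i \<noteq> sbit b i"
  using bits_eq[of a N b] assms by (auto simp: dimH_def)

definition splice_state :: "nat \<Rightarrow> nat set \<Rightarrow> nat \<Rightarrow> nat \<Rightarrow> nat" where
  "splice_state N T c r = bnum N (\<lambda>i. if i \<in> T then sbit c i else sbit r i)"

lemma splice_state_less: "splice_state N T c r < dimH N"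
  unfolding splice_state_def by (rule bnum_less) (simp add: sbit_less_2)

lemma splice_state_sbit: "i < N \<Longrightarrow> sbit (splice_state N T c r) i = (if i \<in> T then sbit c i else sbit r i)"
  unfolding splice_state_def by (rule bnum_sbit) (simp_all add: sbit_less_2)

definition put_site :: "nat \<Rightarrow> nat \<Rightarrow> nat \<Rightarrow> nat \<Rightarrow> nat" where
  "put_site N p v r = bnum N (\<lambda>i. if i = p then v else sbit r i)"

lemma put_site_less: "v < 2 \<Longrightarrow> put_site N p v r < dimH N"
  unfolding put_site_def by (rule bnum_less) (simp add: sbit_less_2)

lemma put_site_sbit: "v < 2 \<Longrightarrow> i < N \<Longrightarrow> sbit (put_site N p v r) i = (if i = p then v else sbit r i)"
  unfolding put_site_def by (rule bnum_sbit) (auto simp: sbit_less_2)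

section \<open>Locality and commutation\<close>

definition agree :: "nat \<Rightarrow> nat set \<Rightarrow> nat \<Rightarrow> nat \<Rightarrow> bool" where
  "agree N T r c \<longleftrightarrow> (\<forall>k<N. k \<notin> T \<longrightarrow> sbit r k = sbit c k)"

text \<open>A acts only on the sites T: it is the identity elsewhere, tensored with a matrix on T.\<close>
definition local_op :: "nat \<Rightarrow> nat set \<Rightarrow> complex mat \<Rightarrow> bool" where
  "local_op N T A \<longleftrightarrow> A \<in> carrier_mat (dimH N) (dimH N)
    \<and> (\<forall>r<dimH N. \<forall>c<dimH N. \<not> agree N T r c \<longrightarrow> A $$ (r, c) = 0)
    \<and> (\<forall>r c r' c'. r < dimH N \<longrightarrow> c < dimH N \<longrightarrow> r' < dimH N \<longrightarrow> c' < dimH N \<longrightarrow>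
         agree N T r c \<longrightarrow> agree N T r' c' \<longrightarrow>
         (\<forall>k<N. k \<in> T \<longrightarrow> sbit r k = sbit r' k \<and> sbit c k = sbit c' k) \<longrightarrow>
         A $$ (r, c) = A $$ (r', c'))"

lemma local_op_zero:
  "local_op N T A \<Longrightarrow> r < dimH N \<Longrightarrow> c < dimH N \<Longrightarrow> \<not> agree N T r c \<Longrightarrow> A $$ (r, c) = 0"
  unfolding local_op_def by blast

lemma local_op_cong:
  assumes "local_op N T A" "r < dimH N" "c < dimH N" "r' < dimH N" "c' < dimH N"
    and "agree N T r c" "agree N T r' c'"
    and "\<And>k. k < N \<Longrightarrow> k \<in> T \<Longrightarrow> sbit r k = sbit r' k \<and> sbit c k = sbit c' k"
  shows "A $$ (r, c) = A $$ (r', c')"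
  using assms unfolding local_op_def by blast

lemma mult_entry:
  assumes "A \<in> carrier_mat D D" "B \<in> carrier_mat D D" "r < D" "c < D"
  shows "(A * B) $$ (r, c) = (\<Sum>k<D. A $$ (r, k) * B $$ (k, c))"
  using assms by (auto simp: scalar_prod_def lessThan_atLeast0 intro!: sum.cong)

lemma mult_entry_single:
  assumes "A \<in> carrier_mat D D" "B \<in> carrier_mat D D" "r < D" "c < D" "k0 < D"
    and "\<And>k. k < D \<Longrightarrow> k \<noteq> k0 \<Longrightarrow> A $$ (r, k) * B $$ (k, c) = 0"
  shows "(A * B) $$ (r, c) = A $$ (r, k0) * B $$ (k0, c)"
proof -
  have "(A * B) $$ (r, c) = (\<Sum>k<D. A $$ (r, k) * B $$ (k, c))"
    using mult_entry assms by blast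
  also have "\<dots> = (\<Sum>k<D. if k = k0 then A $$ (r, k) * B $$ (k, c) else 0)"
    using assms(6) by (intro sum.cong) auto
  finally show ?thesis using assms(5) by simp
qed

lemma local_mult_entry:
  assumes A: "local_op N T A" and B: "local_op N U B" and TU: "T \<inter> U = {}"
    and r: "r < dimH N" and c: "c < dimH N"
  shows "(A * B) $$ (r, c) = A $$ (r, splice_state N T c r) * B $$ (splice_state N T c r, c)"
proof (rule mult_entry_single[OF _ _ r c splice_state_less])
  show "A \<in> carrier_mat (dimH N) (dimH N)" "B \<in> carrier_mat (dimH N) (dimH N)"
    using A B by (auto simp: local_op_def)
  fix k assume k: "k < dimH N" "k \<noteq> splice_state N T c r"
  then obtain i where i: "i < N" "sbit k i \<noteq> sbit (splice_state N T c r) i"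
    using differing_site splice_state_less by metis
  show "A $$ (r, k) * B $$ (k, c) = 0"
  proof (cases "i \<in> T")
    case True
    then have "\<not> agree N U k c" using i TU by (auto simp: agree_def splice_state_sbit)
    then show ?thesis using local_op_zero[OF B k(1) c] by simp
  next
    case False
    then have "\<not> agree N T r k" using i by (auto simp: agree_def splice_state_sbit)
    then show ?thesis using local_op_zero[OF A r k(1)] by simp
  qed
qed

lemma local_splice_swap:
  assumes A: "local_op N T A" and TU: "T \<inter> U = {}" and rc: "agree N (T \<union> U) r c"
    and r: "r < dimH N" and c: "c < dimH N"
  shows "A $$ (r, splice_state N T c r) = A $$ (splice_state N U c r, c)"
  using TU rc
  by (intro local_op_cong[OF A r splice_state_less splice_state_less c])
     (auto simp: agree_def splice_state_sbit)

lemma local_splice_zero: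
  assumes B: "local_op N U B" and rc: "\<not> agree N (T \<union> U) r c" and c: "c < dimH N"
  shows "B $$ (splice_state N T c r, c) = 0"
proof -
  obtain i where "i < N" "i \<notin> T" "i \<notin> U" "sbit r i \<noteq> sbit c i"
    using rc by (auto simp: agree_def)
  then have "\<not> agree N U (splice_state N T c r) c" by (auto simp: agree_def splice_state_sbit)
  then show ?thesis using local_op_zero[OF B splice_state_less c] by simp
qed

theorem local_commute:
  assumes A: "local_op N T A" and B: "local_op N U B" and TU: "T \<inter> U = {}"
  shows "A * B = B * A"
proof (rule eq_matI)
  have dims: "A \<in> carrier_mat (dimH N) (dimH N)" "B \<in> carrier_mat (dimH N) (dimH N)"
    using A B by (auto simp: local_op_def)
  then show "dim_row (A * B) = dim_row (B * A)" "dim_col (A * B) = dim_col (B * A)" by auto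
  fix r c assume "r < dim_row (B * A)" "c < dim_col (B * A)"
  then have r: "r < dimH N" and c: "c < dimH N" using dims by auto
  have UT: "U \<inter> T = {}" and UT_agree: "agree N (U \<union> T) r c \<longleftrightarrow> agree N (T \<union> U) r c"
    using TU by (auto simp: Un_commute)
  show "(A * B) $$ (r, c) = (B * A) $$ (r, c)"
    unfolding local_mult_entry[OF A B TU r c] local_mult_entry[OF B A UT r c]
  proof (cases "agree N (T \<union> U) r c")
    case True
    then show "A $$ (r, splice_state N T c r) * B $$ (splice_state N T c r, c)
             = B $$ (r, splice_state N U c r) * A $$ (splice_state N U c r, c)"
      using local_splice_swap[OF A TU _ r c] local_splice_swap[OF B UT _ r c] UT_agree
      by simp
  next
    case False
    then show "A $$ (r, splice_state N T c r) * B $$ (splice_state N T c r, c)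
             = B $$ (r, splice_state N U c r) * A $$ (splice_state N U c r, c)"
      using local_splice_zero[OF B _ c] local_splice_zero[OF A _ c] UT_agree
      by (simp add: Un_commute)
  qed
qed


section \<open>Matrix elements of the Jordan-Wigner fermions\<close>

lemma site_op_entry:
  "r < dimH N \<Longrightarrow> c < dimH N \<Longrightarrow> site_op N j A $$ (r, c) =
     (if agree N {j - 1} r c then A $$ (sbit r (j - 1), sbit c (j - 1)) else 0)"
  by (simp add: site_op_def agree_def)

lemma less_2_cases: "(x::nat) < 2 \<Longrightarrow> x = 0 \<or> x = 1"
  by auto

lemma splus_entry: "r < dimH N \<Longrightarrow> c < dimH N \<Longrightarrow> splus N j $$ (r, c) =
   (if agree N {j - 1} r c \<and> sbit r (j - 1) = 0 \<and> sbit c (j - 1) = 1 then 1 else 0)"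
  using less_2_cases[OF sbit_less_2, of r "j - 1"] less_2_cases[OF sbit_less_2, of c "j - 1"]
  by (auto simp: splus_def site_op_entry pauli_plus_def mat_of_rows_list_def)

lemma sminus_entry: "r < dimH N \<Longrightarrow> c < dimH N \<Longrightarrow> sminus N j $$ (r, c) =
   (if agree N {j - 1} r c \<and> sbit r (j - 1) = 1 \<and> sbit c (j - 1) = 0 then 1 else 0)"
  using less_2_cases[OF sbit_less_2, of r "j - 1"] less_2_cases[OF sbit_less_2, of c "j - 1"]
  by (auto simp: sminus_def site_op_entry pauli_minus_def mat_of_rows_list_def)

lemma sz_diag: "r < dimH N \<Longrightarrow> sz N k $$ (r, r) = (if sbit r (k - 1) = 0 then 1 else -1)"
  using less_2_cases[OF sbit_less_2, of r "k - 1"]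
  by (auto simp: sz_def site_op_entry agree_def pauli_z_def mat_of_rows_list_def)

definition jw_string :: "nat \<Rightarrow> nat \<Rightarrow> complex" where
  "jw_string r j = (\<Sum>k\<in>{1..<j}. if sbit r (k - 1) = 0 then 1 else -1)"

lemma sz_string_diag: "r < dimH N \<Longrightarrow> sz_string N j $$ (r, r) = jw_string r j"
  by (simp add: sz_string_def op_sum_def jw_string_def sz_diag)

lemma jw_string_Suc:
  "1 \<le> j \<Longrightarrow> jw_string r (Suc j) = jw_string r j + (if sbit r (j - 1) = 0 then 1 else -1)"
  by (simp add: jw_string_def)

lemma jw_string_put_site:
  assumes "j \<le> N" "j \<le> p + 1" "v < 2"
  shows "jw_string (put_site N p v r) j = jw_string r j"
proof -
  have "sbit (put_site N p v r) (k - 1) = sbit r (k - 1)" if "k \<in> {1..<j}" for k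
  proof -
    have "k - 1 < N" "k - 1 \<noteq> p" using that assms by auto
    then show ?thesis using assms(3) by (simp add: put_site_sbit)
  qed
  then show ?thesis unfolding jw_string_def by (intro sum.cong) auto
qed

lemma diag_fun_mult_entry:
  assumes "dim_row A = D" "B \<in> carrier_mat D D" "r < D" "c < D"
  shows "(diag_fun f A * B) $$ (r, c) = f (A $$ (r, r)) * B $$ (r, c)"
proof -
  have "diag_fun f A \<in> carrier_mat D D" using assms by (simp add: diag_fun_def)
  then have "(diag_fun f A * B) $$ (r, c) = (\<Sum>k<D. diag_fun f A $$ (r, k) * B $$ (k, c))"
    using mult_entry assms by blast
  also have "\<dots> = (\<Sum>k<D. if k = r then f (A $$ (r, r)) * B $$ (k, c) else 0)"
    using assms by (intro sum.cong) (auto simp: diag_fun_def)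
  finally show ?thesis using assms by simp
qed

text \<open>The phase picked up by c^dagger_j from the string acting on a state with string
  eigenvalue S; c_j carries the inverse phase.\<close>
definition jw_phase :: "nat \<Rightarrow> complex \<Rightarrow> complex" where
  "jw_phase j S = \<i> ^ (j - 1) * \<i> powr S"

lemma jw_phase_nonzero: "jw_phase j S \<noteq> 0"
  by (simp add: jw_phase_def)

lemma cann_phase: "1 \<le> j \<Longrightarrow> \<i> powi (1 - int j) * \<i> powr (- S) = inverse (jw_phase j S)"
proof -
  assume "1 \<le> j"
  then have "\<i> powi (1 - int j) = inverse (\<i> ^ (j - 1))"
    by (simp add: power_int_minus[symmetric] of_nat_diff flip: power_int_of_nat)
  moreover have "\<i> powr (- S) = inverse (\<i> powr S)"
    using powr_add[of \<i> S "- S"] by (simp add: inverse_eq_divide field_simps)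
  ultimately show ?thesis by (simp add: jw_phase_def)
qed

text \<open>Moving one site to the right while the string gains +1 multiplies the phase by i * i.\<close>
lemma jw_phase_Suc: "1 \<le> j \<Longrightarrow> jw_phase (Suc j) (S + 1) = - jw_phase j S"
proof -
  assume "1 \<le> j"
  then have "\<i> ^ (Suc j - 1) = \<i> ^ (j - 1) * \<i>"
    by (simp add: power_Suc2[symmetric])
  moreover have "\<i> powr (S + 1) = \<i> powr S * \<i>"
    by (simp add: powr_add powr_to_1)
  ultimately have "jw_phase (Suc j) (S + 1) = jw_phase j S * (\<i> * \<i>)"
    by (simp add: jw_phase_def algebra_simps)
  then show ?thesis by simp
qed

lemma splus_carrier: "splus N j \<in> carrier_mat (dimH N) (dimH N)"
  by (simp add: splus_def site_op_def)

lemma sminus_carrier: "sminus N j \<in> carrier_mat (dimH N) (dimH N)"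
  by (simp add: sminus_def site_op_def)

lemma sz_string_dim: "dim_row (sz_string N j) = dimH N"
  by (simp add: sz_string_def op_sum_def)

lemma cdag_carrier: "cdag N j \<in> carrier_mat (dimH N) (dimH N)"
  unfolding cdag_def
  by (intro smult_carrier_mat mult_carrier_mat[OF _ splus_carrier]) (simp add: diag_fun_def sz_string_dim)

lemma cann_carrier: "cann N j \<in> carrier_mat (dimH N) (dimH N)"
  unfolding cann_def
  by (intro smult_carrier_mat mult_carrier_mat[OF _ sminus_carrier]) (simp add: diag_fun_def sz_string_dim)

lemma cdag_dims [simp]: "dim_row (cdag N j) = dimH N" "dim_col (cdag N j) = dimH N"
  using cdag_carrier[of N j] by auto

lemma cann_dims [simp]: "dim_row (cann N j) = dimH N" "dim_col (cann N j) = dimH N"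
  using cann_carrier[of N j] by auto

lemma cdag_entry:
  assumes "r < dimH N" "c < dimH N"
  shows "cdag N j $$ (r, c) = jw_phase j (jw_string r j) * splus N j $$ (r, c)"
  using assms diag_fun_mult_entry[OF sz_string_dim splus_carrier assms, of "\<lambda>x. \<i> powr x"]
    splus_carrier[of N j]
  by (simp add: cdag_def jw_phase_def diag_fun_def sz_string_dim sz_string_diag)

lemma cann_entry:
  assumes "1 \<le> j" "r < dimH N" "c < dimH N"
  shows "cann N j $$ (r, c) = inverse (jw_phase j (jw_string r j)) * sminus N j $$ (r, c)"
  using assms diag_fun_mult_entry[OF sz_string_dim sminus_carrier assms(2,3), of "\<lambda>x. \<i> powr (- x)"]
    sminus_carrier[of N j]
  by (simp add: cann_def cann_phase[symmetric] diag_fun_def sz_string_dim sz_string_diag)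


lemma hop_mult_entry:
  assumes X: "X \<in> carrier_mat (dimH N) (dimH N)" and Y: "Y \<in> carrier_mat (dimH N) (dimH N)"
    and r: "r < dimH N" and c: "c < dimH N" and p: "p < N" and v: "v < 2"
    and X_entry: "\<And>r k. r < dimH N \<Longrightarrow> k < dimH N \<Longrightarrow>
       X $$ (r, k) = (if agree N {p} r k \<and> sbit r p = u \<and> sbit k p = v then \<alpha> r else 0)"
  shows "(X * Y) $$ (r, c) = (if sbit r p = u then \<alpha> r * Y $$ (put_site N p v r, c) else 0)"
proof -
  let ?k = "put_site N p v r"
  have k: "?k < dimH N" by (rule put_site_less[OF v])
  have k_bits: "\<And>i. i < N \<Longrightarrow> sbit ?k i = (if i = p then v else sbit r i)"
    by (rule put_site_sbit[OF v])
  have "(X * Y) $$ (r, c) = X $$ (r, ?k) * Y $$ (?k, c)"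
  proof (rule mult_entry_single[OF X Y r c k])
    fix k' assume k': "k' < dimH N" "k' \<noteq> ?k"
    then obtain i where "i < N" "sbit k' i \<noteq> sbit ?k i"
      using differing_site k by metis
    then have "\<not> (agree N {p} r k' \<and> sbit k' p = v)"
      using k_bits by (auto simp: agree_def split: if_splits)
    then show "X $$ (r, k') * Y $$ (k', c) = 0"
      using X_entry[OF r k'(1)] by auto
  qed
  moreover have "agree N {p} r ?k" "sbit ?k p = v"
    using k_bits p by (auto simp: agree_def)
  ultimately show ?thesis using X_entry[OF r k] by auto
qed

lemma agree_put_site:
  assumes "p < N" "q \<noteq> p" "v < 2"
  shows "agree N {q} (put_site N p v r) c \<longleftrightarrow> agree N {p, q} r c \<and> sbit c p = v"
  using assms put_site_sbit[OF assms(3)] unfolding agree_def by (metis insert_iff singletonD)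

lemma agree_put_site_same:
  "v < 2 \<Longrightarrow> agree N {p} (put_site N p v r) c \<longleftrightarrow> agree N {p} r c"
  using put_site_sbit unfolding agree_def by auto

lemma agree_split:
  "q < N \<Longrightarrow> q \<noteq> p \<Longrightarrow> agree N {p} r c \<longleftrightarrow> agree N {p, q} r c \<and> sbit r q = sbit c q"
  unfolding agree_def by auto

text \<open>The four quadratic terms of e_j.  In each of them the string phases cancel, up to the
  sign coming from jw_phase_Suc.\<close>
lemma cann_cdag_next_entry:
  assumes j: "1 \<le> j" "j < N" and r: "r < dimH N" and c: "c < dimH N"
  shows "(cann N j * cdag N (j + 1)) $$ (r, c) =
    (if agree N {j - 1, j} r c \<and> sbit r (j - 1) = 1 \<and> sbit r j = 0 \<and> sbit c (j - 1) = 0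
        \<and> sbit c j = 1 then -1 else 0)"
proof -
  define S where "S = jw_string r j"
  define k where "k = put_site N (j - 1) 0 r"
  have hop: "(cann N j * cdag N (j + 1)) $$ (r, c) =
     (if sbit r (j - 1) = 1 then inverse (jw_phase j S) * cdag N (j + 1) $$ (k, c) else 0)"
    unfolding S_def k_def
    by (rule hop_mult_entry[OF cann_carrier cdag_carrier r c])
       (use j in \<open>auto simp: cann_entry sminus_entry\<close>)
  have k_bits: "sbit k (j - 1) = 0" "sbit k j = sbit r j"
    using j by (auto simp: k_def put_site_sbit)
  have "jw_string k (Suc j) = S + 1"
    using jw_string_Suc[OF j(1), of k] k_bits jw_string_put_site[of j N "j - 1" 0 r] j
    by (simp add: S_def k_def)
  moreover have "agree N {j} k c \<longleftrightarrow> agree N {j - 1, j} r c \<and> sbit c (j - 1) = 0"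
    unfolding k_def using j by (intro agree_put_site) auto
  ultimately have "cdag N (j + 1) $$ (k, c) = - jw_phase j S *
     (if agree N {j - 1, j} r c \<and> sbit c (j - 1) = 0 \<and> sbit r j = 0 \<and> sbit c j = 1 then 1 else 0)"
    using j c put_site_less[of 0 N "j - 1" r] k_bits
    by (simp add: k_def cdag_entry splus_entry jw_phase_Suc)
  then show ?thesis
    unfolding hop using jw_phase_nonzero[of j S] by auto
qed

lemma cann_next_cdag_entry:
  assumes j: "1 \<le> j" "j < N" and r: "r < dimH N" and c: "c < dimH N"
  shows "(cann N (j + 1) * cdag N j) $$ (r, c) =
    (if agree N {j - 1, j} r c \<and> sbit r (j - 1) = 0 \<and> sbit r j = 1 \<and> sbit c (j - 1) = 1
        \<and> sbit c j = 0 then -1 else 0)"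
proof -
  define S where "S = jw_string r j"
  define k where "k = put_site N j 0 r"
  have hop: "(cann N (j + 1) * cdag N j) $$ (r, c) = (if sbit r j = 1
     then inverse (jw_phase (j + 1) (jw_string r (j + 1))) * cdag N j $$ (k, c) else 0)"
    unfolding k_def
    by (rule hop_mult_entry[OF cann_carrier cdag_carrier r c])
       (use j in \<open>auto simp: cann_entry sminus_entry\<close>)
  have k_bits: "sbit k (j - 1) = sbit r (j - 1)" "sbit k j = 0"
    using j by (auto simp: k_def put_site_sbit)
  have "jw_string k j = S"
    unfolding S_def k_def using j by (intro jw_string_put_site) auto
  moreover have "agree N {j - 1} k c \<longleftrightarrow> agree N {j - 1, j} r c \<and> sbit c j = 0"
    unfolding k_def using j agree_put_site[of j N "j - 1" 0 r c] by (simp add: insert_commute)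
  ultimately have "cdag N j $$ (k, c) = jw_phase j S *
     (if agree N {j - 1, j} r c \<and> sbit c j = 0 \<and> sbit r (j - 1) = 0 \<and> sbit c (j - 1) = 1
      then 1 else 0)"
    using c put_site_less[of 0 N j r] k_bits by (simp add: k_def cdag_entry splus_entry)
  moreover have "sbit r (j - 1) = 0 \<Longrightarrow> jw_phase (j + 1) (jw_string r (j + 1)) = - jw_phase j S"
    using jw_string_Suc[OF j(1), of r] jw_phase_Suc[OF j(1)] by (simp add: S_def)
  ultimately show ?thesis
    unfolding hop using jw_phase_nonzero[of j S] by auto
qed

lemma cdag_cann_entry:
  assumes j: "1 \<le> j" "j < N" and r: "r < dimH N" and c: "c < dimH N"
  shows "(cdag N j * cann N j) $$ (r, c) =
    (if agree N {j - 1, j} r c \<and> sbit r j = sbit c j \<and> sbit r (j - 1) = 0 \<and> sbit c (j - 1) = 0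
     then 1 else 0)"
proof -
  define S where "S = jw_string r j"
  define k where "k = put_site N (j - 1) 1 r"
  have hop: "(cdag N j * cann N j) $$ (r, c) =
     (if sbit r (j - 1) = 0 then jw_phase j S * cann N j $$ (k, c) else 0)"
    unfolding S_def k_def
    by (rule hop_mult_entry[OF cdag_carrier cann_carrier r c])
       (use j in \<open>auto simp: cdag_entry splus_entry\<close>)
  have "sbit k (j - 1) = 1"
    using j by (auto simp: k_def put_site_sbit)
  moreover have "jw_string k j = S"
    unfolding S_def k_def using j by (intro jw_string_put_site) auto
  moreover have "agree N {j - 1} k c \<longleftrightarrow> agree N {j - 1, j} r c \<and> sbit r j = sbit c j"
    unfolding k_def using agree_put_site_same[of 1 N "j - 1" r c] agree_split[of j N "j - 1" r c] j
    by simp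
  ultimately have "cann N j $$ (k, c) = inverse (jw_phase j S) *
     (if agree N {j - 1, j} r c \<and> sbit r j = sbit c j \<and> sbit c (j - 1) = 0 then 1 else 0)"
    using j c put_site_less[of 1 N "j - 1" r] by (simp add: k_def cann_entry sminus_entry)
  then show ?thesis
    unfolding hop using jw_phase_nonzero[of j S] by auto
qed

lemma cdag_cann_next_entry:
  assumes j: "1 \<le> j" "j < N" and r: "r < dimH N" and c: "c < dimH N"
  shows "(cdag N (j + 1) * cann N (j + 1)) $$ (r, c) =
    (if agree N {j - 1, j} r c \<and> sbit r (j - 1) = sbit c (j - 1) \<and> sbit r j = 0 \<and> sbit c j = 0
     then 1 else 0)"
proof -
  define S where "S = jw_string r (j + 1)"
  define k where "k = put_site N j 1 r"
  have hop: "(cdag N (j + 1) * cann N (j + 1)) $$ (r, c) =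
     (if sbit r j = 0 then jw_phase (j + 1) S * cann N (j + 1) $$ (k, c) else 0)"
    unfolding S_def k_def
    by (rule hop_mult_entry[OF cdag_carrier cann_carrier r c])
       (use j in \<open>auto simp: cdag_entry splus_entry\<close>)
  have "sbit k j = 1"
    using j by (auto simp: k_def put_site_sbit)
  moreover have "jw_string k (j + 1) = S"
    unfolding S_def k_def using j by (intro jw_string_put_site) auto
  moreover have "agree N {j} k c \<longleftrightarrow> agree N {j - 1, j} r c \<and> sbit r (j - 1) = sbit c (j - 1)"
    unfolding k_def using j agree_put_site_same[of 1 N j r c] agree_split[of "j - 1" N j r c]
    by (simp add: insert_commute)
  ultimately have "cann N (j + 1) $$ (k, c) = inverse (jw_phase (j + 1) S) *
     (if agree N {j - 1, j} r c \<and> sbit r (j - 1) = sbit c (j - 1) \<and> sbit c j = 0 then 1 else 0)"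
    using c put_site_less[of 1 N j r] by (simp add: k_def cann_entry sminus_entry)
  then show ?thesis
    unfolding hop using jw_phase_nonzero[of "j + 1" S] by auto
qed

text \<open>The 4 x 4 matrix of e_j on the sites j, j+1 (bits j - 1, j), from bits (x, y) to (x', y').\<close>
definition e_site :: "nat \<Rightarrow> nat \<Rightarrow> nat \<Rightarrow> nat \<Rightarrow> complex" where
  "e_site x y x' y' = (if x = 1 \<and> y = 0 \<and> x' = 0 \<and> y' = 1 then -1 else 0)
     + (if x = 0 \<and> y = 1 \<and> x' = 1 \<and> y' = 0 then -1 else 0)
     + \<i> * ((if y = y' \<and> x = 0 \<and> x' = 0 then 1 else 0) - (if x = x' \<and> y = 0 \<and> y' = 0 then 1 else 0))"

lemma e_gen_carrier: "e_gen N j \<in> carrier_mat (dimH N) (dimH N)"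
  using cdag_carrier cann_carrier unfolding e_gen_def carrier_mat_def by simp

lemma e_gen_entry:
  assumes j: "1 \<le> j" "j < N" and r: "r < dimH N" and c: "c < dimH N"
  shows "e_gen N j $$ (r, c) = (if agree N {j - 1, j} r c
     then e_site (sbit r (j - 1)) (sbit r j) (sbit c (j - 1)) (sbit c j) else 0)"
proof -
  have "e_gen N j $$ (r, c) = (cann N j * cdag N (j + 1)) $$ (r, c) + (cann N (j + 1) * cdag N j) $$ (r, c)
     + \<i> * ((cdag N j * cann N j) $$ (r, c) - (cdag N (j + 1) * cann N (j + 1)) $$ (r, c))"
    using r c by (simp add: e_gen_def)
  then show ?thesis
    unfolding cann_cdag_next_entry[OF j r c] cann_next_cdag_entry[OF j r c]
      cdag_cann_entry[OF j r c] cdag_cann_next_entry[OF j r c] e_site_def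
    by auto
qed

lemma e_gen_local:
  assumes j: "1 \<le> j" "j < N"
  shows "local_op N {j - 1, j} (e_gen N j)"
  unfolding local_op_def
proof (intro conjI allI impI e_gen_carrier)
  fix r c assume "r < dimH N" "c < dimH N" "\<not> agree N {j - 1, j} r c"
  then show "e_gen N j $$ (r, c) = 0" by (simp add: e_gen_entry[OF j])
next
  fix r c r' c'
  assume "r < dimH N" "c < dimH N" "r' < dimH N" "c' < dimH N"
    and "agree N {j - 1, j} r c" "agree N {j - 1, j} r' c'"
    and same: "\<forall>k<N. k \<in> {j - 1, j} \<longrightarrow> sbit r k = sbit r' k \<and> sbit c k = sbit c' k"
  moreover have "j - 1 < N" using j by simp
  ultimately show "e_gen N j $$ (r, c) = e_gen N j $$ (r', c')"
    using same[rule_format, of "j - 1"] same[rule_format, of j] j by (simp add: e_gen_entry[OF j])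
qed

lemma e_gen_commute:
  assumes "1 \<le> j" "j < N" "1 \<le> l" "l < N" "j + 1 < l \<or> l + 1 < j"
  shows "e_gen N j * e_gen N l = e_gen N l * e_gen N j"
  by (rule local_commute[OF e_gen_local e_gen_local]) (use assms in auto)


section \<open>Commutators of sums over a chain\<close>

lemma op_sum_carrier: "op_sum N F J \<in> carrier_mat (dimH N) (dimH N)"
  by (simp add: op_sum_def)

lemma op_sum_entry: "r < dimH N \<Longrightarrow> c < dimH N \<Longrightarrow> op_sum N F J $$ (r, c) = (\<Sum>j\<in>J. F j $$ (r, c))"
  by (simp add: op_sum_def)

lemma op_sum_dims [simp]: "dim_row (op_sum N F J) = dimH N" "dim_col (op_sum N F J) = dimH N"
  by (simp_all add: op_sum_def)

lemma smult_entry: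
  "A \<in> carrier_mat (dimH N) (dimH N) \<Longrightarrow> r < dimH N \<Longrightarrow> c < dimH N \<Longrightarrow> (a \<cdot>\<^sub>m A) $$ (r, c) = a * A $$ (r, c)"
  by simp

lemma comm_carrier:
  "A \<in> carrier_mat D D \<Longrightarrow> B \<in> carrier_mat D D \<Longrightarrow> comm A B \<in> carrier_mat D D"
  unfolding comm_def by (intro minus_carrier_mat mult_carrier_mat)

lemma op_sum_mult_entry:
  assumes E: "\<And>j. E j \<in> carrier_mat (dimH N) (dimH N)" and r: "r < dimH N" and c: "c < dimH N"
  shows "(op_sum N (\<lambda>j. a j \<cdot>\<^sub>m E j) J * op_sum N (\<lambda>j. b j \<cdot>\<^sub>m E j) J) $$ (r, c)
       = (\<Sum>j\<in>J. \<Sum>l\<in>J. a j * b l * (E j * E l) $$ (r, c))"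
proof -
  let ?D = "dimH N"
  have "(op_sum N (\<lambda>j. a j \<cdot>\<^sub>m E j) J * op_sum N (\<lambda>j. b j \<cdot>\<^sub>m E j) J) $$ (r, c)
      = (\<Sum>k<?D. (\<Sum>j\<in>J. a j * E j $$ (r, k)) * (\<Sum>l\<in>J. b l * E l $$ (k, c)))"
    unfolding mult_entry[OF op_sum_carrier op_sum_carrier r c]
    using r c by (intro sum.cong) (auto simp: op_sum_entry smult_entry[OF E])
  also have "\<dots> = (\<Sum>k<?D. \<Sum>j\<in>J. \<Sum>l\<in>J. a j * b l * (E j $$ (r, k) * E l $$ (k, c)))"
    by (simp add: sum_product algebra_simps)
  also have "\<dots> = (\<Sum>j\<in>J. \<Sum>k<?D. \<Sum>l\<in>J. a j * b l * (E j $$ (r, k) * E l $$ (k, c)))"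
    by (rule sum.swap)
  also have "\<dots> = (\<Sum>j\<in>J. \<Sum>l\<in>J. \<Sum>k<?D. a j * b l * (E j $$ (r, k) * E l $$ (k, c)))"
    by (intro sum.cong refl sum.swap)
  also have "\<dots> = (\<Sum>j\<in>J. \<Sum>l\<in>J. a j * b l * (E j * E l) $$ (r, c))"
    by (simp add: mult_entry[OF E E r c] sum_distrib_left)
  finally show ?thesis .
qed

lemma neighbour_double_sum:
  fixes a b :: "nat \<Rightarrow> 'a::comm_ring" and Q :: "nat \<Rightarrow> nat \<Rightarrow> 'a"
  assumes fin: "finite J"
    and antisym: "\<And>j l. Q l j = - Q j l"
    and support: "\<And>j l. j \<in> J \<Longrightarrow> l \<in> J \<Longrightarrow> l \<noteq> j + 1 \<Longrightarrow> j \<noteq> l + 1 \<Longrightarrow> Q j l = 0"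
  shows "(\<Sum>j\<in>J. \<Sum>l\<in>J. a j * b l * Q j l)
       = (\<Sum>j\<in>{j\<in>J. j + 1 \<in> J}. (a j * b (j + 1) - a (j + 1) * b j) * Q j (j + 1))"
proof -
  let ?up = "\<lambda>j l. if l = j + 1 then a j * b l * Q j l else 0"
  let ?down = "\<lambda>j l. if j = l + 1 then a j * b l * Q j l else 0"
  have "a j * b l * Q j l = ?up j l + ?down j l" if "j \<in> J" "l \<in> J" for j l
    using support[OF that] by auto
  then have "(\<Sum>j\<in>J. \<Sum>l\<in>J. a j * b l * Q j l) = (\<Sum>j\<in>J. \<Sum>l\<in>J. ?up j l + ?down j l)"
    by (intro sum.cong refl) auto
  also have "\<dots> = (\<Sum>j\<in>J. \<Sum>l\<in>J. ?up j l) + (\<Sum>j\<in>J. \<Sum>l\<in>J. ?down j l)"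
    by (simp add: sum.distrib)
  also have "(\<Sum>j\<in>J. \<Sum>l\<in>J. ?down j l) = (\<Sum>l\<in>J. \<Sum>j\<in>J. ?down j l)"
    by (rule sum.swap)
  also have "(\<Sum>j\<in>J. \<Sum>l\<in>J. ?up j l) + (\<Sum>l\<in>J. \<Sum>j\<in>J. ?down j l)
      = (\<Sum>j\<in>J. if j + 1 \<in> J then (a j * b (j + 1) - a (j + 1) * b j) * Q j (j + 1) else 0)"
  proof -
    have "Q (j + 1) j = - Q j (j + 1)" for j by (rule antisym)
    then show ?thesis
      using fin by (simp add: sum.distrib[symmetric] algebra_simps sum.If_cases if_distrib)
  qed
  finally show ?thesis using fin by (simp only: sum.inter_filter)
qed

theorem comm_op_sum_neighbours:
  fixes E :: "nat \<Rightarrow> complex mat"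
  assumes fin: "finite J" and E: "\<And>j. E j \<in> carrier_mat (dimH N) (dimH N)"
    and far: "\<And>j l. j \<in> J \<Longrightarrow> l \<in> J \<Longrightarrow> j + 1 < l \<or> l + 1 < j \<Longrightarrow> E j * E l = E l * E j"
  shows "comm (op_sum N (\<lambda>j. a j \<cdot>\<^sub>m E j) J) (op_sum N (\<lambda>j. b j \<cdot>\<^sub>m E j) J)
       = op_sum N (\<lambda>j. (a j * b (j + 1) - a (j + 1) * b j) \<cdot>\<^sub>m comm (E j) (E (j + 1)))
           {j\<in>J. j + 1 \<in> J}"
proof (rule eq_matI)
  fix r c assume "r < dim_row (op_sum N (\<lambda>j. (a j * b (j + 1) - a (j + 1) * b j)
      \<cdot>\<^sub>m comm (E j) (E (j + 1))) {j\<in>J. j + 1 \<in> J})"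
    "c < dim_col (op_sum N (\<lambda>j. (a j * b (j + 1) - a (j + 1) * b j)
      \<cdot>\<^sub>m comm (E j) (E (j + 1))) {j\<in>J. j + 1 \<in> J})"
  then have r: "r < dimH N" and c: "c < dimH N" by (simp_all add: op_sum_def)
  define Q where "Q j l = comm (E j) (E l) $$ (r, c)" for j l
  have Q_prod: "Q j l = (E j * E l) $$ (r, c) - (E l * E j) $$ (r, c)" for j l
    using E[of j] E[of l] r c by (simp add: Q_def comm_def)
  have "comm (op_sum N (\<lambda>j. a j \<cdot>\<^sub>m E j) J) (op_sum N (\<lambda>j. b j \<cdot>\<^sub>m E j) J) $$ (r, c)
      = (\<Sum>j\<in>J. \<Sum>l\<in>J. a j * b l * (E j * E l) $$ (r, c))
        - (\<Sum>l\<in>J. \<Sum>j\<in>J. b l * a j * (E l * E j) $$ (r, c))"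
    using r c by (simp add: comm_def op_sum_mult_entry[OF E r c])
  also have "\<dots> = (\<Sum>j\<in>J. \<Sum>l\<in>J. a j * b l * Q j l)"
    by (subst sum.swap[of _ J]) (simp add: Q_prod sum_subtractf[symmetric] algebra_simps)
  also have "\<dots> = (\<Sum>j\<in>{j\<in>J. j + 1 \<in> J}. (a j * b (j + 1) - a (j + 1) * b j) * Q j (j + 1))"
  proof (rule neighbour_double_sum[OF fin])
    show "Q l j = - Q j l" for j l by (simp add: Q_prod)
    show "Q j l = 0" if "j \<in> J" "l \<in> J" "l \<noteq> j + 1" "j \<noteq> l + 1" for j l
    proof (cases "j = l")
      case False
      then have "j + 1 < l \<or> l + 1 < j" using that by linarith
      then show ?thesis using far[OF that(1,2)] by (simp add: Q_prod)
    qed (simp add: Q_prod)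
  qed
  also have "\<dots> = op_sum N (\<lambda>j. (a j * b (j + 1) - a (j + 1) * b j) \<cdot>\<^sub>m comm (E j) (E (j + 1)))
      {j\<in>J. j + 1 \<in> J} $$ (r, c)"
  proof -
    have C: "comm (E j) (E l) \<in> carrier_mat (dimH N) (dimH N)" for j l
      by (intro comm_carrier E)
    show ?thesis using r c by (simp add: op_sum_entry Q_def smult_entry[OF C])
  qed
  finally show "comm (op_sum N (\<lambda>j. a j \<cdot>\<^sub>m E j) J) (op_sum N (\<lambda>j. b j \<cdot>\<^sub>m E j) J) $$ (r, c)
      = op_sum N (\<lambda>j. (a j * b (j + 1) - a (j + 1) * b j) \<cdot>\<^sub>m comm (E j) (E (j + 1)))
          {j\<in>J. j + 1 \<in> J} $$ (r, c)" .
qed (simp_all add: comm_def op_sum_def)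

lemma smult_op_sum:
  assumes M: "\<And>j. M j \<in> carrier_mat (dimH N) (dimH N)"
  shows "\<gamma> \<cdot>\<^sub>m op_sum N (\<lambda>j. p j \<cdot>\<^sub>m M j) J = op_sum N (\<lambda>j. (\<gamma> * p j) \<cdot>\<^sub>m M j) J"
  by (intro eq_matI) (auto simp: op_sum_entry smult_entry[OF M] sum_distrib_left mult.assoc)

lemma op_sum_add:
  assumes M: "\<And>j. M j \<in> carrier_mat (dimH N) (dimH N)"
  shows "op_sum N (\<lambda>j. p j \<cdot>\<^sub>m M j) J + op_sum N (\<lambda>j. q j \<cdot>\<^sub>m M j) J
       = op_sum N (\<lambda>j. (p j + q j) \<cdot>\<^sub>m M j) J"
  by (intro eq_matI) (auto simp: op_sum_entry smult_entry[OF M] sum.distrib[symmetric]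
      algebra_simps intro!: sum.cong)

definition H0_coef :: "nat \<Rightarrow> int \<Rightarrow> nat \<Rightarrow> complex" where
  "H0_coef N n j = complex_of_real (cos (pi * real_of_int n * real j / real N))"

definition nn_coef :: "nat \<Rightarrow> int \<Rightarrow> int \<Rightarrow> nat \<Rightarrow> complex" where
  "nn_coef N n m j = H0_coef N n j * H0_coef N m (j + 1) - H0_coef N n (j + 1) * H0_coef N m j"

text \<open>Since e_j and e_l commute for |j - l| > 1, [H0_n, H0_m] is a sum over neighbouring
  commutators; H1_k is the same sum for (0, k), rescaled.\<close>
lemma comm_H0:
  "comm (H0 N n) (H0 N m) = op_sum N (\<lambda>j. nn_coef N n m j \<cdot>\<^sub>m comm (e_gen N j) (e_gen N (j + 1)))
     {j \<in> {1..N - 1}. j + 1 \<in> {1..N - 1}}"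
  unfolding H0_def nn_coef_def H0_coef_def
  by (rule comm_op_sum_neighbours) (auto intro: e_gen_carrier e_gen_commute)

lemma H1_op_sum:
  "H1 N k = complex_of_real (- 1 / (4 * sin (pi * real_of_int k / (2 * real N)))) \<cdot>\<^sub>m
     op_sum N (\<lambda>j. nn_coef N 0 k j \<cdot>\<^sub>m comm (e_gen N j) (e_gen N (j + 1)))
       {j \<in> {1..N - 1}. j + 1 \<in> {1..N - 1}}"
  unfolding H1_def comm_H0 ..

section \<open>Trigonometric identities for the coefficients\<close>

text \<open>Product-to-sum formulas for the coefficients (t = pi / 2N, J the site index).\<close>
lemma cos_diff_neighbours:
  fixes k J t :: real
  shows "cos (2*k*(J+1)*t) - cos (2*k*J*t) = - 2 * sin (k*t) * sin (k*(2*J+1)*t)"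
proof -
  have "cos (2*k*(J+1)*t) - cos (2*k*J*t)
      = 2 * sin ((2*k*(J+1)*t + 2*k*J*t) / 2) * sin ((2*k*J*t - 2*k*(J+1)*t) / 2)"
    by (rule cos_diff_cos)
  moreover have "(2*k*(J+1)*t + 2*k*J*t) / 2 = k*(2*J+1)*t"
    and "(2*k*J*t - 2*k*(J+1)*t) / 2 = - (k*t)"
    by (simp_all add: algebra_simps)
  ultimately show ?thesis by simp
qed

lemma cos_cross_neighbours:
  fixes x y J t :: real
  shows "cos (2*x*J*t) * cos (2*y*(J+1)*t) - cos (2*x*(J+1)*t) * cos (2*y*J*t)
       = sin ((x-y)*t) * sin ((x+y)*(2*J+1)*t) + sin ((x+y)*t) * sin ((x-y)*(2*J+1)*t)"
proof -
  have "(x+y)*t - (x-y)*(2*J+1)*t = - (2*x*J*t - 2*y*(J+1)*t)"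
    and "(x-y)*t - (x+y)*(2*J+1)*t = - (2*x*J*t + 2*y*(J+1)*t)"
    by (simp_all add: algebra_simps)
  then have "cos ((x+y)*t - (x-y)*(2*J+1)*t) = cos (2*x*J*t - 2*y*(J+1)*t)"
    and "cos ((x-y)*t - (x+y)*(2*J+1)*t) = cos (2*x*J*t + 2*y*(J+1)*t)"
    by (metis cos_minus)+
  moreover have "(x+y)*t + (x-y)*(2*J+1)*t = 2*x*(J+1)*t - 2*y*J*t"
    and "(x-y)*t + (x+y)*(2*J+1)*t = 2*x*(J+1)*t + 2*y*J*t"
    by (simp_all add: algebra_simps)
  ultimately show ?thesis
    unfolding cos_times_cos sin_times_sin by (simp add: field_simps)
qed

lemma cos_cross_decomposition:
  fixes x y J t :: real
  assumes "sin ((x+y)*t) \<noteq> 0" and "sin ((x-y)*t) \<noteq> 0"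
  shows "cos (2*x*J*t) * cos (2*y*(J+1)*t) - cos (2*x*(J+1)*t) * cos (2*y*J*t) =
    2 * sin ((x-y)*t) * (-1 / (4 * sin ((x+y)*t))) * (cos (2*(x+y)*(J+1)*t) - cos (2*(x+y)*J*t))
  + 2 * sin ((x+y)*t) * (-1 / (4 * sin ((x-y)*t))) * (cos (2*(x-y)*(J+1)*t) - cos (2*(x-y)*J*t))"
  unfolding cos_cross_neighbours cos_diff_neighbours using assms by (simp add: field_simps)

lemma nn_coef_decomposition:
  fixes N :: nat and n m :: int
  assumes N: "N > 0"
    and s_plus: "sin (pi * real_of_int (n + m) / (2 * real N)) \<noteq> 0"
    and s_minus: "sin (pi * real_of_int (n - m) / (2 * real N)) \<noteq> 0"
  shows "nn_coef N n m j =
      complex_of_real (2 * sin (pi * real_of_int (n - m) / (2 * real N))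
        * (- 1 / (4 * sin (pi * real_of_int (n + m) / (2 * real N))))) * nn_coef N 0 (n + m) j
    + complex_of_real (2 * sin (pi * real_of_int (n + m) / (2 * real N))
        * (- 1 / (4 * sin (pi * real_of_int (n - m) / (2 * real N))))) * nn_coef N 0 (n - m) j"
proof -
  define t where "t = pi / (2 * real N)"
  define x where "x = real_of_int n"
  define y where "y = real_of_int m"
  define J where "J = real j"
  have cos_arg: "pi * a * b / real N = 2 * a * b * t" for a b
    using N by (simp add: t_def field_simps)
  have sin_arg: "pi * a / (2 * real N) = a * t" for a
    by (simp add: t_def)
  have "cos (2*x*J*t) * cos (2*y*(J+1)*t) - cos (2*x*(J+1)*t) * cos (2*y*J*t) =
    2 * sin ((x-y)*t) * (-1 / (4 * sin ((x+y)*t))) * (cos (2*(x+y)*(J+1)*t) - cos (2*(x+y)*J*t))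
  + 2 * sin ((x+y)*t) * (-1 / (4 * sin ((x-y)*t))) * (cos (2*(x-y)*(J+1)*t) - cos (2*(x-y)*J*t))"
    using s_plus s_minus by (intro cos_cross_decomposition) (simp_all add: sin_arg x_def y_def)
  then have "complex_of_real (cos (2*x*J*t) * cos (2*y*(J+1)*t) - cos (2*x*(J+1)*t) * cos (2*y*J*t))
    = complex_of_real (2 * sin ((x-y)*t) * (-1 / (4 * sin ((x+y)*t))) * (cos (2*(x+y)*(J+1)*t) - cos (2*(x+y)*J*t))
    + 2 * sin ((x+y)*t) * (-1 / (4 * sin ((x-y)*t))) * (cos (2*(x-y)*(J+1)*t) - cos (2*(x-y)*J*t)))"
    by simp
  then show ?thesis
    unfolding nn_coef_def H0_coef_def cos_arg sin_arg
    by (simp add: x_def y_def J_def add.commute)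
qed

lemma sin_half_angle_nonzero:
  assumes N: "N > 0" and nd: "\<not> (2 * int N) dvd k"
  shows "sin (pi * real_of_int k / (2 * real N)) \<noteq> 0"
proof
  assume "sin (pi * real_of_int k / (2 * real N)) = 0"
  then obtain i where "pi * real_of_int k / (2 * real N) = real_of_int i * pi"
    by (auto simp: sin_zero_iff_int2)
  then have "real_of_int k = real_of_int (2 * int N * i)"
    using N by (simp add: field_simps)
  then have "k = 2 * int N * i" by (simp only: of_int_eq_iff)
  then show False using nd by simp
qed

theorem mainTheorem5:
  fixes N :: nat and n m :: int
  assumes "N \<ge> 2"
    and "\<not> (2 * int N) dvd (n + m)"
    and "\<not> (2 * int N) dvd (n - m)"
  shows "comm (H0 N n) (H0 N m) =
    complex_of_real (2 * sin (pi * real_of_int (n - m) / (2 * real N))) \<cdot>\<^sub>m H1 N (n + m)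
    + complex_of_real (2 * sin (pi * real_of_int (n + m) / (2 * real N))) \<cdot>\<^sub>m H1 N (n - m)"
proof -
  have N: "N > 0" using assms(1) by simp
  define C where "C j = comm (e_gen N j) (e_gen N (j + 1))" for j
  define K where "K = {j \<in> {1..N - 1}. j + 1 \<in> {1..N - 1}}"
  define s_plus where "s_plus = sin (pi * real_of_int (n + m) / (2 * real N))"
  define s_minus where "s_minus = sin (pi * real_of_int (n - m) / (2 * real N))"
  have C_carrier: "C j \<in> carrier_mat (dimH N) (dimH N)" for j
    unfolding C_def by (intro comm_carrier e_gen_carrier)
  have "comm (H0 N n) (H0 N m) = op_sum N (\<lambda>j. nn_coef N n m j \<cdot>\<^sub>m C j) K"
    unfolding comm_H0 C_def K_def ..
  also have "\<dots> = op_sum N (\<lambda>j.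
      (complex_of_real (2 * s_minus) * (complex_of_real (- 1 / (4 * s_plus)) * nn_coef N 0 (n + m) j)
     + complex_of_real (2 * s_plus) * (complex_of_real (- 1 / (4 * s_minus)) * nn_coef N 0 (n - m) j))
      \<cdot>\<^sub>m C j) K"
    using nn_coef_decomposition[OF N sin_half_angle_nonzero[OF N assms(2)]
        sin_half_angle_nonzero[OF N assms(3)]]
    unfolding s_plus_def[symmetric] s_minus_def[symmetric]
    by (intro arg_cong[where f = "\<lambda>f. op_sum N f K"] ext) (simp only: of_real_mult mult.assoc)
  also have "\<dots> = complex_of_real (2 * s_minus) \<cdot>\<^sub>m H1 N (n + m)
      + complex_of_real (2 * s_plus) \<cdot>\<^sub>m H1 N (n - m)"
    unfolding H1_op_sum C_def[symmetric] K_def[symmetric] s_plus_def[symmetric] s_minus_def[symmetric]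
      smult_op_sum[OF C_carrier] op_sum_add[OF C_carrier] ..
  finally show ?thesis unfolding s_plus_def s_minus_def .
qed

end
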